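(* Let $\sigma:\mathbb{Z}\to\mathbb{Z}$ be an admissible injective function. Then for every $k\in\mathbb{Z}$ there exist record indices $r_-$ and $r_+$ of $\sigma$ with $r_-<k<r_+$.
   Context: $\sigma:\mathbb{Z}\to\mathbb{Z}$ is admissible if $|\{i\in\mathbb{N}:\sigma(i)\notin\mathbb{N}\}|+|\{i\in\mathbb{Z}\setminus\mathbb{N}:\sigma(i)\in\mathbb{N}\}|<\infty$, where $\mathbb{N}=\{1,2,\dots\}$. A record index of $\sigma$ is an $r\in\mathbb{Z}$ such that $\sigma(r)>\sigma(k)$ for all $k<r$. *)

theory Defs
  imports Main
begin

definition posInts :: "int set" where
  "posInts = {i. i \<ge> 1}"

definition admissible :: "(int \<Rightarrow> int) \<Rightarrow> bool" where
  "admissible \<sigma> \<longleftrightarrow>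
     finite {i \<in> posInts. \<sigma> i \<notin> posInts} \<and>
     finite {i \<in> UNIV - posInts. \<sigma> i \<in> posInts}"

definition record_index :: "(int \<Rightarrow> int) \<Rightarrow> int \<Rightarrow> bool" where
  "record_index \<sigma> r \<longleftrightarrow> (\<forall>k<r. \<sigma> r > \<sigma> k)"

end

theory Submission
  imports Defs
begin

text \<open>Admissibility bounds \<sigma> from above on every left half-line \<open>{..m}\<close>, so \<sigma> attains a
  maximum there; by injectivity all earlier values are strictly smaller, so the position of that
  maximum is a record index, and \<open>m = k - 1\<close> gives \<open>r\<^sub>-\<close>. An injective admissible \<sigma> maps all but
  finitely many indices \<open>> k\<close> to distinct positive values, so it is unbounded above on \<open>{k<..}\<close>.
  Choosing \<open>m\<close> with \<open>\<sigma> m\<close> above every value on \<open>{..k}\<close>, the position of the maximum on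
  \<open>{..m}\<close> carries a value \<open>\<ge> \<sigma> m\<close>, so it lies to the right of \<open>k\<close> and gives \<open>r\<^sub>+\<close>.\<close>

lemma int_cSup_mem:
  fixes X :: "int set"
  assumes "bdd_above X" and "X \<noteq> {}"
  shows "Sup X \<in> X"
proof -
  obtain x where "x \<in> X" and "Sup X - 1 < x"
    using less_cSupE[of "Sup X - 1" X] assms(2) by auto
  moreover have "x \<le> Sup X"
    using cSup_upper[OF \<open>x \<in> X\<close> assms(1)] .
  ultimately have "x = Sup X"
    by linarith
  with \<open>x \<in> X\<close> show ?thesis
    by simp
qed

lemma admissible_bdd_above_atMost:
  assumes "admissible \<sigma>"
  shows "bdd_above (\<sigma> ` {..k})"
proof -
  define S where "S = {i \<in> UNIV - posInts. \<sigma> i \<in> posInts}"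
  have "finite S"
    using assms unfolding admissible_def S_def by blast
  then have "bdd_above (\<sigma> ` (S \<union> {1..k}) \<union> {..0})"
    by simp
  moreover have "\<sigma> ` {..k} \<subseteq> \<sigma> ` (S \<union> {1..k}) \<union> {..0}"
    unfolding S_def posInts_def by auto
  ultimately show ?thesis
    by (rule bdd_above_mono)
qed

lemma admissible_not_bdd_above_greaterThan:
  assumes "admissible \<sigma>" and "inj \<sigma>"
  shows "\<not> bdd_above (\<sigma> ` {k<..})"
proof
  assume "bdd_above (\<sigma> ` {k<..})"
  then obtain B where B: "\<And>j. j > k \<Longrightarrow> \<sigma> j \<le> B"
    by (auto simp: bdd_above_def)
  define T where "T = {i \<in> posInts. \<sigma> i \<notin> posInts}"
  have "finite T"
    using assms(1) unfolding admissible_def T_def by blast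
  define P where "P = {max k 0<..} - T"
  have "infinite P"
    using \<open>finite T\<close> infinite_Ioi[of "max k 0"] unfolding P_def by auto
  moreover have "inj_on \<sigma> P"
    using assms(2) by (rule inj_on_subset) simp
  moreover have "\<sigma> ` P \<subseteq> {1..B}"
    using B unfolding P_def T_def posInts_def by auto
  ultimately show False
    using finite_imageD finite_subset by blast
qed

lemma admissible_argmax_atMost:
  assumes "admissible \<sigma>"
  shows "\<exists>r\<le>m. \<forall>j\<le>m. \<sigma> j \<le> \<sigma> r"
proof -
  have bdd: "bdd_above (\<sigma> ` {..m})"
    using assms by (rule admissible_bdd_above_atMost)
  then have "Sup (\<sigma> ` {..m}) \<in> \<sigma> ` {..m}"
    by (rule int_cSup_mem) simp
  then obtain r where "r \<le> m" and r_Sup: "\<sigma> r = Sup (\<sigma> ` {..m})"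
    by auto
  have "\<sigma> j \<le> \<sigma> r" if "j \<le> m" for j
    unfolding r_Sup using bdd that by (intro cSup_upper) simp_all
  with \<open>r \<le> m\<close> show ?thesis
    by blast
qed

lemma record_index_if_argmax_atMost:
  assumes "inj \<sigma>" and "r \<le> m" and "\<forall>j\<le>m. \<sigma> j \<le> \<sigma> r"
  shows "record_index \<sigma> r"
  unfolding record_index_def
proof (intro allI impI)
  fix j
  assume "j < r"
  then have "\<sigma> j \<le> \<sigma> r" and "\<sigma> j \<noteq> \<sigma> r"
    using assms by (auto dest: injD)
  then show "\<sigma> j < \<sigma> r"
    by simp
qed

lemma ex_record_index_less:
  assumes "admissible \<sigma>" and "inj \<sigma>"
  shows "\<exists>r<k. record_index \<sigma> r"
proof -
  obtain r where "r \<le> k - 1" and "\<forall>j\<le>k - 1. \<sigma> j \<le> \<sigma> r"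
    using admissible_argmax_atMost[OF assms(1), of "k - 1"] by blast
  then show ?thesis
    using record_index_if_argmax_atMost[OF assms(2)] by fastforce
qed

lemma ex_record_index_greater:
  assumes "admissible \<sigma>" and "inj \<sigma>"
  shows "\<exists>r>k. record_index \<sigma> r"
proof -
  obtain r0 where r0_max: "\<forall>j\<le>k. \<sigma> j \<le> \<sigma> r0"
    using admissible_argmax_atMost[OF assms(1), of k] by blast
  have "\<not> bdd_above (\<sigma> ` {k<..})"
    using assms by (rule admissible_not_bdd_above_greaterThan)
  then obtain m where "\<sigma> r0 < \<sigma> m"
    using bdd_aboveI2[of "{k<..}" \<sigma> "\<sigma> r0"] by (meson not_le)
  obtain r where "r \<le> m" and r_max: "\<forall>j\<le>m. \<sigma> j \<le> \<sigma> r"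
    using admissible_argmax_atMost[OF assms(1), of m] by blast
  have "k < r"
  proof (rule ccontr)
    assume "\<not> k < r"
    have "\<sigma> m \<le> \<sigma> r"
      using r_max by simp
    also have "\<sigma> r \<le> \<sigma> r0"
      using r0_max \<open>\<not> k < r\<close> by simp
    finally show False
      using \<open>\<sigma> r0 < \<sigma> m\<close> by simp
  qed
  moreover have "record_index \<sigma> r"
    using assms(2) \<open>r \<le> m\<close> r_max by (rule record_index_if_argmax_atMost)
  ultimately show ?thesis
    by blast
qed

theorem lemma2p3:
  fixes \<sigma> :: "int \<Rightarrow> int"
  assumes "admissible \<sigma>" and "inj \<sigma>"
  shows "\<forall>k. \<exists>rm rp. record_index \<sigma> rm \<and> record_index \<sigma> rp \<and> rm < k \<and> k < rp"
  using ex_record_index_less[OF assms] ex_record_index_greater[OF assms] by blast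

end
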